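(* Let $d\ge1$, let $y\in\mathbb{R}^d$ satisfy $\|y\|_\infty\le 1/2$, and let $q\ge d+2\pi$. Then $$\sum_{x\in\mathbb{Z}^d\setminus\{0\}}\frac{1}{\|x+y\|^q}\le\Big[(1+\sqrt d)\sqrt{d+3}\Big]^q,$$ where $\|\cdot\|$ is the Euclidean norm. *)

theory Defs
  imports "HOL-Analysis.Analysis"
begin

end

theory Submission
  imports Defs
begin

text \<open>Split the nonzero lattice points into the shells
  \<open>S\<^sub>m = {x \<in> \<int>\<^sup>d. \<parallel>x\<parallel>\<^sub>\<infinity> = m}\<close>, \<open>m \<ge> 1\<close>.  On \<open>S\<^sub>m\<close> some coordinate of \<open>x + y\<close>
  has modulus at least \<open>m - 1/2 \<ge> m/2\<close>, and \<open>S\<^sub>m\<close> has at most \<open>(2m + 1)\<^sup>d \<le> (3m)\<^sup>d\<close>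
  points, so the shell contributes at most \<open>2\<^sup>q 3\<^sup>d m\<^sup>d / m\<^sup>q \<le> 2\<^sup>q 3\<^sup>d / m\<^sup>2\<close>
  because \<open>q \<ge> d + 2\<close>.  Summing \<open>1/m\<^sup>2 \<le> 2\<close> bounds every finite partial sum by
  \<open>2 \<cdot> 3\<^sup>d 2\<^sup>q\<close>, and an elementary estimate shows
  \<open>2 \<cdot> 3\<^sup>d 2\<^sup>q \<le> (d + 3)\<^sup>q \<le> ((1 + \<surd>d) \<surd>(d + 3))\<^sup>q\<close> once \<open>q \<ge> d + 6\<close>.\<close>

definition lattice_cube :: "nat \<Rightarrow> (real ^ 'n) set" where
  "lattice_cube M = {x. \<forall>i. x $ i \<in> \<int> \<and> \<bar>x $ i\<bar> \<le> real M}"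

lemma lattice_cube_mono: "M \<le> N \<Longrightarrow> lattice_cube M \<subseteq> lattice_cube N"
  unfolding lattice_cube_def by (simp add: Collect_mono_iff) (meson of_nat_le_iff order_trans)

lemma zero_in_lattice_cube: "0 \<in> lattice_cube M"
  unfolding lattice_cube_def by simp

lemma lattice_cube_0: "lattice_cube 0 = {0}"
  unfolding lattice_cube_def by (auto simp: vec_eq_iff)

lemma lattice_cube_subset_PiE:
  "lattice_cube M \<subseteq> vec_lambda ` PiE UNIV (\<lambda>_. of_int ` {-int M..int M})"
proof
  fix x :: "real ^ 'n"
  assume x: "x \<in> lattice_cube M"
  have "x $ i \<in> of_int ` {-int M..int M}" for i
  proof -
    from x have "x $ i \<in> \<int>" and bound: "\<bar>x $ i\<bar> \<le> real M"
      unfolding lattice_cube_def by auto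
    then obtain k where "x $ i = of_int k"
      by (auto elim: Ints_cases)
    with bound have "k \<in> {-int M..int M}" by auto
    with \<open>x $ i = of_int k\<close> show ?thesis by auto
  qed
  then have "vec_nth x \<in> PiE UNIV (\<lambda>_. of_int ` {-int M..int M})" by auto
  then show "x \<in> vec_lambda ` PiE UNIV (\<lambda>_. of_int ` {-int M..int M})"
    by (metis image_eqI vec_nth_inverse)
qed

lemma finite_lattice_cube: "finite (lattice_cube M)"
  by (rule finite_subset[OF lattice_cube_subset_PiE]) (simp add: finite_PiE)

lemma card_lattice_cube_le: "card (lattice_cube M :: (real ^ 'n) set) \<le> (2 * M + 1) ^ CARD('n)"
proof -
  let ?P = "PiE (UNIV :: 'n set) (\<lambda>_. of_int ` {-int M..int M} :: real set)"
  have "card (lattice_cube M :: (real ^ 'n) set) \<le> card (vec_lambda ` ?P)"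
    by (rule card_mono[OF _ lattice_cube_subset_PiE]) (simp add: finite_PiE)
  also have "\<dots> \<le> card ?P"
    by (rule card_image_le) (simp add: finite_PiE)
  also have "\<dots> = card (of_int ` {-int M..int M} :: real set) ^ CARD('n)"
    by (simp add: card_PiE)
  also have "\<dots> = nat (2 * int M + 1) ^ CARD('n)"
    by (simp add: card_image inj_on_def)
  also have "\<dots> = (2 * M + 1) ^ CARD('n)"
    by (simp add: nat_add_distrib nat_mult_distrib)
  finally show ?thesis .
qed

lemma finite_subset_lattice_cube:
  assumes "finite F" and "F \<subseteq> {x :: real ^ 'n. \<forall>i. x $ i \<in> \<int>}"
  obtains M where "F \<subseteq> lattice_cube M"
proof -
  obtain B where B: "\<And>x. x \<in> F \<Longrightarrow> norm x \<le> B"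
    using finite_imp_bounded[OF assms(1)] by (auto simp: bounded_iff)
  have "\<bar>x $ i\<bar> \<le> real (nat \<lceil>B\<rceil>)" if "x \<in> F" for x i
    using component_le_norm_cart[of x i] B[OF that] real_nat_ceiling_ge[of B] by linarith
  then have "F \<subseteq> lattice_cube (nat \<lceil>B\<rceil>)"
    using assms(2) unfolding lattice_cube_def by blast
  then show thesis by (rule that)
qed

lemma sum_inverse_squares_le: "M \<ge> 1 \<Longrightarrow> (\<Sum>m=1..M. 1 / (real m)\<^sup>2) \<le> 2 - 1 / real M"
proof (induction M rule: nat_induct_at_least)
  case base
  then show ?case by simp
next
  case (Suc M)
  have "1 / (real M + 1)\<^sup>2 \<le> 1 / (real M * (real M + 1))"
    using Suc.hyps by (intro frac_le) (auto simp: power2_eq_square)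
  also have "\<dots> = 1 / real M - 1 / (real M + 1)"
    using Suc.hyps by (simp add: field_simps)
  finally have "1 / (real M + 1)\<^sup>2 \<le> 1 / real M - 1 / (real M + 1)" .
  with Suc.IH show ?case
    by (simp add: add.commute)
qed

lemma power_div_powr_le_inverse_square:
  fixes a q :: real
  assumes "a \<ge> 1" and "q \<ge> real d + 2"
  shows "a ^ d / a powr q \<le> 1 / a\<^sup>2"
proof -
  have "a ^ d * a\<^sup>2 = a ^ (d + 2)"
    by (rule power_add[symmetric])
  also have "\<dots> = a powr real (d + 2)"
    using assms(1) by (intro powr_realpow[symmetric]) simp
  also have "\<dots> \<le> a powr q"
    using assms by (intro powr_mono) auto
  finally show ?thesis
    using assms(1) by (simp add: field_simps)
qed

lemma norm_add_ge_outside_lattice_cube: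
  fixes x y :: "real ^ 'n"
  assumes "\<forall>i. x $ i \<in> \<int>" and "x \<notin> lattice_cube M" and "\<forall>i. \<bar>y $ i\<bar> \<le> 1/2"
  shows "real M + 1/2 \<le> norm (x + y)"
proof -
  obtain i where i: "\<bar>x $ i\<bar> > real M"
    using assms(1,2) unfolding lattice_cube_def by (auto simp: not_le)
  obtain k where k: "x $ i = of_int k"
    using assms(1) by (meson Ints_cases)
  with i have "\<bar>k\<bar> \<ge> int M + 1" by linarith
  with k have "\<bar>x $ i\<bar> \<ge> real M + 1" by linarith
  moreover have "\<bar>y $ i\<bar> \<le> 1/2"
    using assms(3) by simp
  ultimately have "real M + 1/2 \<le> \<bar>(x + y) $ i\<bar>"
    by simp
  also have "\<dots> \<le> norm (x + y)"
    by (rule component_le_norm_cart)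
  finally show ?thesis .
qed

context
  fixes y :: "real ^ 'n" and q :: real
  assumes y_small: "\<forall>i. \<bar>y $ i\<bar> \<le> 1/2"
    and q_large: "q \<ge> real CARD('n) + 2"
begin

lemma sum_lattice_shell_le:
  "(\<Sum>x \<in> lattice_cube (Suc M) - lattice_cube M. 1 / norm (x + y) powr q)
    \<le> 2 powr q * 3 ^ CARD('n) / (real (Suc M))\<^sup>2"
proof -
  define S :: "(real ^ 'n) set" where "S = lattice_cube (Suc M) - lattice_cube M"
  define a where "a = real (Suc M)"
  have a: "a \<ge> 1" unfolding a_def by simp
  have term_le: "1 / norm (x + y) powr q \<le> 2 powr q / a powr q" if "x \<in> S" for x
  proof -
    have "real M + 1/2 \<le> norm (x + y)"
      using that by (intro norm_add_ge_outside_lattice_cube[OF _ _ y_small])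
        (auto simp: S_def lattice_cube_def)
    then have "a / 2 \<le> norm (x + y)"
      unfolding a_def by simp
    then have "(a / 2) powr q \<le> norm (x + y) powr q"
      using a q_large by (intro powr_mono2) auto
    moreover have "0 < (a / 2) powr q"
      using a by simp
    ultimately have "1 / norm (x + y) powr q \<le> 1 / (a / 2) powr q"
      by (intro divide_left_mono mult_pos_pos) auto
    then show ?thesis by (simp add: powr_divide)
  qed
  have card_le: "real (card S) \<le> (3 * a) ^ CARD('n)"
  proof -
    have "card S \<le> card (lattice_cube (Suc M) :: (real ^ 'n) set)"
      unfolding S_def by (rule card_mono) (auto simp: finite_lattice_cube)
    also have "\<dots> \<le> (2 * Suc M + 1) ^ CARD('n)"
      by (rule card_lattice_cube_le)
    finally have "real (card S) \<le> real ((2 * Suc M + 1) ^ CARD('n))"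
      by (simp only: of_nat_le_iff)
    also have "\<dots> = (2 * a + 1) ^ CARD('n)"
      unfolding a_def by simp
    also have "\<dots> \<le> (3 * a) ^ CARD('n)"
      using a by (intro power_mono) auto
    finally show ?thesis .
  qed
  have "(\<Sum>x\<in>S. 1 / norm (x + y) powr q) \<le> (\<Sum>x\<in>S. 2 powr q / a powr q)"
    by (rule sum_mono) (rule term_le)
  also have "\<dots> = real (card S) * (2 powr q / a powr q)"
    by simp
  also have "\<dots> \<le> (3 * a) ^ CARD('n) * (2 powr q / a powr q)"
    by (rule mult_right_mono[OF card_le]) simp
  also have "\<dots> = 2 powr q * 3 ^ CARD('n) * (a ^ CARD('n) / a powr q)"
    by (simp add: power_mult_distrib)
  also have "\<dots> \<le> 2 powr q * 3 ^ CARD('n) * (1 / a\<^sup>2)"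
    using power_div_powr_le_inverse_square[OF a q_large] by (intro mult_left_mono) auto
  finally show ?thesis
    unfolding S_def a_def by simp
qed

lemma sum_lattice_cube_le:
  "(\<Sum>x \<in> lattice_cube M - {0}. 1 / norm (x + y) powr q)
    \<le> 2 powr q * 3 ^ CARD('n) * (\<Sum>m=1..M. 1 / (real m)\<^sup>2)"
proof (induction M)
  case 0
  then show ?case by (simp add: lattice_cube_0)
next
  case (Suc M)
  have shells: "lattice_cube (Suc M) - {0} = (lattice_cube (Suc M) - lattice_cube M) \<union> (lattice_cube M - {0})"
    using lattice_cube_mono[of M "Suc M"] zero_in_lattice_cube[of M] by auto
  have "(\<Sum>x \<in> lattice_cube (Suc M) - {0}. 1 / norm (x + y) powr q)
      = (\<Sum>x \<in> lattice_cube (Suc M) - lattice_cube M. 1 / norm (x + y) powr q)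
        + (\<Sum>x \<in> lattice_cube M - {0}. 1 / norm (x + y) powr q)"
    unfolding shells by (rule sum.union_disjoint) (auto simp: finite_lattice_cube)
  then show ?case
    using sum_lattice_shell_le[of M] Suc.IH by (simp add: distrib_left)
qed

lemma sum_finite_lattice_subset_le:
  assumes "finite F" and "F \<subseteq> {x. \<forall>i. x $ i \<in> \<int>} - {0}"
  shows "(\<Sum>x\<in>F. 1 / norm (x + y) powr q) \<le> 2 * 3 ^ CARD('n) * 2 powr q"
proof -
  obtain M where "F \<subseteq> lattice_cube M"
    by (rule finite_subset_lattice_cube[OF assms(1)]) (use assms(2) in blast)
  moreover have "lattice_cube M \<subseteq> lattice_cube (Suc M)"
    by (rule lattice_cube_mono) simp
  ultimately have "F \<subseteq> lattice_cube (Suc M) - {0}"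
    using assms(2) by blast
  then have "(\<Sum>x\<in>F. 1 / norm (x + y) powr q) \<le> (\<Sum>x \<in> lattice_cube (Suc M) - {0}. 1 / norm (x + y) powr q)"
    by (intro sum_mono2) (auto simp: finite_lattice_cube)
  also have "\<dots> \<le> 2 powr q * 3 ^ CARD('n) * (\<Sum>m=1..Suc M. 1 / (real m)\<^sup>2)"
    by (rule sum_lattice_cube_le)
  also have "\<dots> \<le> 2 powr q * 3 ^ CARD('n) * 2"
  proof (intro mult_left_mono)
    have "(\<Sum>m=1..Suc M. 1 / (real m)\<^sup>2) \<le> 2 - 1 / real (Suc M)"
      by (rule sum_inverse_squares_le) simp
    moreover have "0 \<le> 1 / real (Suc M)"
      by simp
    ultimately show "(\<Sum>m=1..Suc M. 1 / (real m)\<^sup>2) \<le> 2"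
      by linarith
  qed simp
  finally show ?thesis by (simp add: mult_ac)
qed

end

lemma two_mult_3_power_mult_2_powr_le:
  fixes q :: real
  assumes "d \<ge> 1" and "q \<ge> real d + 6"
  shows "2 * 3 ^ d * 2 powr q \<le> (real d + 3) powr q"
proof -
  have "(128 :: nat) * 6 ^ d \<le> (d + 3) ^ (d + 6)"
  proof (cases "d \<le> 2")
    case True
    with assms(1) have "d = 1 \<or> d = 2" by auto
    then show ?thesis by auto
  next
    case False
    have "(128 :: nat) \<le> 6 ^ 6" by simp
    also have "\<dots> \<le> (d + 3) ^ 6"
      using False by (intro power_mono) auto
    finally have "128 * 6 ^ d \<le> (d + 3) ^ 6 * (d + 3) ^ d"
      using False by (intro mult_mono power_mono) auto
    then show ?thesis by (simp add: power_add mult.commute)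
  qed
  then have "real (128 * 6 ^ d) \<le> real ((d + 3) ^ (d + 6))"
    by (simp only: of_nat_le_iff)
  then have "128 * 6 ^ d \<le> (real d + 3) ^ (d + 6)"
    by simp
  moreover have "2 * 3 ^ d * 2 ^ (d + 6) = (128 * 6 ^ d :: real)"
    by (simp add: power_add power_mult_distrib[symmetric])
  ultimately have "2 * 3 ^ d * 2 ^ (d + 6) \<le> (real d + 3) ^ (d + 6)"
    by simp
  then have "2 * 3 ^ d \<le> ((real d + 3) / 2) ^ (d + 6)"
    by (simp add: power_divide field_simps)
  also have "\<dots> = ((real d + 3) / 2) powr (real d + 6)"
    by (subst powr_realpow[symmetric]) auto
  also have "\<dots> \<le> ((real d + 3) / 2) powr q"
    using assms by (intro powr_mono) auto
  also have "\<dots> = (real d + 3) powr q / 2 powr q"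
    by (simp add: powr_divide)
  finally show ?thesis
    by (simp add: field_simps)
qed

lemma add_3_le_sqrt_mult_sqrt:
  assumes "d \<ge> 1"
  shows "real d + 3 \<le> (1 + sqrt (real d)) * sqrt (real d + 3)"
proof -
  have "real d + 1 \<le> sqrt (real d * (real d + 3))"
    using assms by (intro real_le_rsqrt) (simp add: power2_eq_square field_simps)
  moreover have "2 \<le> sqrt (real d + 3)"
    using assms by (intro real_le_rsqrt) simp
  ultimately show ?thesis
    by (simp add: distrib_right real_sqrt_mult)
qed

theorem mainTheorem6:
  fixes y :: "real ^ 'n" and q :: real
  assumes "\<forall>i. \<bar>y $ i\<bar> \<le> 1/2"
    and "q \<ge> real CARD('n) + 2 * pi"
  shows "(\<lambda>x. 1 / norm (x + y) powr q) summable_on ({x. \<forall>i. x $ i \<in> \<int>} - {0})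
    \<and> (\<Sum>\<^sub>\<infinity>x \<in> {x. \<forall>i. x $ i \<in> \<int>} - {0}. 1 / norm (x + y) powr q)
        \<le> ((1 + sqrt (real CARD('n))) * sqrt (real CARD('n) + 3)) powr q"
proof -
  have q6: "q \<ge> real CARD('n) + 6"
    using assms(2) pi_gt3 by linarith
  note partial_sums_le = sum_finite_lattice_subset_le[OF assms(1), of q]
  have summable: "(\<lambda>x. 1 / norm (x + y) powr q) summable_on ({x. \<forall>i. x $ i \<in> \<int>} - {0})"
    using q6 partial_sums_le
    by (intro nonneg_bdd_above_summable_on bdd_aboveI[of _ "2 * 3 ^ CARD('n) * 2 powr q"]) auto
  have "(\<Sum>\<^sub>\<infinity>x \<in> {x. \<forall>i. x $ i \<in> \<int>} - {0}. 1 / norm (x + y) powr q) \<le> 2 * 3 ^ CARD('n) * 2 powr q"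
    using q6 partial_sums_le by (intro infsum_le_finite_sums[OF summable]) auto
  also have "\<dots> \<le> (real CARD('n) + 3) powr q"
    by (rule two_mult_3_power_mult_2_powr_le[OF _ q6]) simp
  also have "\<dots> \<le> ((1 + sqrt (real CARD('n))) * sqrt (real CARD('n) + 3)) powr q"
    using q6 add_3_le_sqrt_mult_sqrt[of "CARD('n)"] by (intro powr_mono2) auto
  finally show ?thesis
    using summable by blast
qed

end
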